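(* Let $\Delta\subset\mathbb{R}^n$ be an $n$-dimensional integral polytope containing the origin and having a unique codimension-1 face $\delta$ not containing the origin, with $\Delta$ the convex hull of $\delta$ and the origin. Let $A=\{V_1,\dots,V_J\}\subset\delta\cap\mathbb{Z}^n$ contain all vertices of $\delta$, let $T=\{\delta_1,\dots,\delta_h\}$ be a regular decomposition of $(\delta,A)$ with associated concave function $\phi$, and let $f=\sum_{j=1}^J a_jx^{V_j}$ with the $a_j$ regarded as indeterminates. If $r\in\Sigma_i$ for some $1\le i\le h$ (and $r$ is a lattice point), then $d(\phi,F_r(f)-F_r(f_{\Sigma_i}))<m(\phi,A;r)$.
   Context: $C(\Delta)$ is the closed cone generated by $\Delta$ and the origin; $w(r)$ is the least $c\ge0$ with $r\in c\Delta$. A regular decomposition of $(\delta,A)$ is a collection of polytopes $\delta_1,\dots,\delta_h$ with vertices in $A$, of full dimension in $\delta$, whose union is $\delta$ and whose pairwise intersections have lower dimension, with a piecewise linear concave $\phi:\delta\to\mathbb{R}$ whose domains of linearity are exactly the $\delta_i$; $\phi$ is extended to $C(\Delta)\setminus\{0\}$ by $\phi(r)=w(r)\phi(r/w(r))$. $\Sigma_i$ is the closed cone generated by $\delta_i$ and the origin, and $f_{\Sigma_i}=\sum_{V_j\in\Sigma_i}a_jx^{V_j}$. $m(\phi,A;r)=\sup\{\sum_j u_j\phi(V_j):\sum_ju_jV_j=r,\ u_j\ge0\}$. Let $\pi$ satisfy $\sum_{m\ge0}\pi^{p^m}/p^m=0$, $\mathrm{ord}_p\pi=1/(p-1)$,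 and let $E(t)=\exp(\sum_{m\ge0}t^{p^m}/p^m)=\sum_m\lambda_mt^m$ be the Artin–Hasse exponential. For $r\in\mathbb{Z}^n$, $F_r(f)=\sum_u\big(\prod_{j=1}^J\lambda_{u_j}a_j^{u_j}\big)\pi^{u_1+\dots+u_J}$, summed over all integral $u=(u_1,\dots,u_J)$ with $u_j\ge0$ and $\sum_ju_jV_j=r$ (and similarly $F_r(f_{\Sigma_i})$ using only the $V_j\in\Sigma_i$). For a polynomial $F=\sum_u\lambda_u\prod_ja_j^{u_j}$, its $\phi$-degree is $d(\phi,F)=\max\{\sum_ju_j\phi(V_j):\lambda_u\neq0\}$, with $d(\phi,0)=-\infty$. *)

theory Defs
  imports "HOL-Analysis.Analysis" "HOL-Computational_Algebra.Formal_Power_Series"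
begin

definition lattice_pt :: "real^'n \<Rightarrow> bool" where
  "lattice_pt x \<longleftrightarrow> (\<forall>i. x $ i \<in> \<int>)"

definition integral_polytope :: "(real^'n) set \<Rightarrow> bool" where
  "integral_polytope P \<longleftrightarrow> (\<exists>S. finite S \<and> (\<forall>x\<in>S. lattice_pt x) \<and> P = convex hull S)"

text \<open>phi is affine (linear in the sense of the paper) on S.\<close>
definition affine_on :: "(real^'n) set \<Rightarrow> (real^'n \<Rightarrow> real) \<Rightarrow> bool" where
  "affine_on S phi \<longleftrightarrow> (\<exists>c b. \<forall>x\<in>S. phi x = c \<bullet> x + b)"

definition regular_decomposition ::
  "(real^'n) set \<Rightarrow> (real^'n) set \<Rightarrow> nat \<Rightarrow> (nat \<Rightarrow> (real^'n) set) \<Rightarrow> (real^'n \<Rightarrow> real) \<Rightarrow> bool" where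
  "regular_decomposition \<delta> A h T phi \<longleftrightarrow>
     (\<forall>i\<in>{1..h}. polytope (T i) \<and> {v. v extreme_point_of (T i)} \<subseteq> A
                 \<and> aff_dim (T i) = aff_dim \<delta>) \<and>
     (\<Union>i\<in>{1..h}. T i) = \<delta> \<and>
     (\<forall>i\<in>{1..h}. \<forall>k\<in>{1..h}. i \<noteq> k \<longrightarrow> aff_dim (T i \<inter> T k) < aff_dim \<delta>) \<and>
     concave_on \<delta> phi \<and>
     (\<forall>i\<in>{1..h}. affine_on (T i) phi) \<and>
     (\<forall>i\<in>{1..h}. \<forall>S. convex S \<and> T i \<subseteq> S \<and> S \<subseteq> \<delta> \<and> affine_on S phi \<longrightarrow> S = T i)"

definition closed_cone_gen :: "(real^'n) set \<Rightarrow> (real^'n) set" where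
  "closed_cone_gen S = closure (convex_cone hull (insert 0 S))"

definition artin_hasse :: "nat \<Rightarrow> rat fps" where
  "artin_hasse p = fps_exp 1 oo Abs_fps (\<lambda>n. if (\<exists>m. n = p ^ m) then 1 / of_nat n else 0)"

definition AH_coeff :: "nat \<Rightarrow> nat \<Rightarrow> rat" where
  "AH_coeff p m = fps_nth (artin_hasse p) m"

text \<open>Polynomials in the indeterminates a_1..a_J are represented by their coefficient
  functions on exponent vectors u :: nat \<Rightarrow> nat (with u j = 0 for j outside {1..J}).
  F_r restricted to the V_j lying in a set C (C = UNIV gives F_r(f), C = Sigma_i gives F_r(f_Sigma_i)).\<close>
definition F_coeff :: "nat \<Rightarrow> 'k::field_char_0 \<Rightarrow> nat \<Rightarrow> (nat \<Rightarrow> real^'n) \<Rightarrow> (real^'n) set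
     \<Rightarrow> real^'n \<Rightarrow> (nat \<Rightarrow> nat) \<Rightarrow> 'k" where
  "F_coeff p \<pi> J V C r u =
     (if (\<forall>j. j \<notin> {1..J} \<longrightarrow> u j = 0) \<and> (\<forall>j\<in>{1..J}. V j \<notin> C \<longrightarrow> u j = 0)
         \<and> (\<Sum>j=1..J. of_nat (u j) *\<^sub>R V j) = r
      then (\<Prod>j=1..J. of_rat (AH_coeff p (u j))) * \<pi> ^ (\<Sum>j=1..J. u j)
      else 0)"

text \<open>phi-degree of a polynomial given by its coefficient function (-\<infinity> for the zero polynomial).\<close>
definition phi_degree :: "(real^'n \<Rightarrow> real) \<Rightarrow> nat \<Rightarrow> (nat \<Rightarrow> real^'n) \<Rightarrow> ((nat \<Rightarrow> nat) \<Rightarrow> 'k::zero) \<Rightarrow> ereal" where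
  "phi_degree phi J V F = Sup ((\<lambda>u. ereal (\<Sum>j=1..J. real (u j) * phi (V j))) ` {u. F u \<noteq> 0})"

definition m_phi :: "(real^'n \<Rightarrow> real) \<Rightarrow> nat \<Rightarrow> (nat \<Rightarrow> real^'n) \<Rightarrow> real^'n \<Rightarrow> ereal" where
  "m_phi phi J V r = Sup ((\<lambda>u. ereal (\<Sum>j=1..J. u j * phi (V j))) `
       {u :: nat \<Rightarrow> real. (\<forall>j\<in>{1..J}. u j \<ge> 0) \<and> (\<Sum>j=1..J. u j *\<^sub>R V j) = r})"

end

theory Submission
  imports Defs
begin

text \<open>Since \<delta> lies in a hyperplane \<open>l \<bullet> x = 1\<close> avoiding the origin, the affine function
  that agrees with \<phi> on \<open>\<delta>\<^sub>i\<close> is the restriction of a linear form \<open>k\<close>. By concavity and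
  maximality of the domains of linearity, \<open>\<phi>(V\<^sub>j) \<le> k \<bullet> V\<^sub>j\<close>, with equality exactly for
  \<open>V\<^sub>j \<in> \<delta>\<^sub>i\<close>. Every monomial of \<open>F\<^sub>r(f) - F\<^sub>r(f\<^sub>\<Sigma>)\<close> has an exponent \<open>u\<close> with
  \<open>\<Sum> u\<^sub>j V\<^sub>j = r\<close> and \<open>u\<^sub>j > 0\<close> for some \<open>V\<^sub>j \<notin> \<Sigma>\<^sub>i\<close>, so its \<phi>-degree is strictly below
  \<open>k \<bullet> r\<close>, and there are only finitely many such monomials. Writing \<open>r\<close> as a nonnegative
  combination of the vertices of \<open>\<delta>\<^sub>i\<close> gives \<open>k \<bullet> r \<le> m(\<phi>, A; r)\<close>.\<close>

lemma concave_on_le_affine_extension: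
  fixes S T :: "'a::euclidean_space set" and phi :: "'a \<Rightarrow> real"
  assumes S: "convex S" and T: "convex T" "T \<subseteq> S" "T \<noteq> {}"
    and hull_eq: "affine hull T = affine hull S"
    and conc: "concave_on S phi" and lin: "\<forall>y\<in>T. phi y = c \<bullet> y + b"
    and x: "x \<in> S"
  shows "phi x \<le> c \<bullet> x + b"
proof -
  obtain q where "q \<in> rel_interior T" using rel_interior_eq_empty T by auto
  then obtain e where e: "e > 0" "ball q e \<inter> affine hull T \<subseteq> T" and qT: "q \<in> T"
    using mem_rel_interior_ball by blast
  show ?thesis
  proof (cases "x = q")
    case True
    then show ?thesis using lin qT by auto
  next
    case False
    define d where "d = norm (x - q)"
    have d: "d > 0" using False d_def by auto
    define s where "s = min (1/2) (e / (2*d))"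
    have s: "s > 0" "s \<le> 1" using e d by (auto simp: s_def)
    define y where "y = (1 - s) *\<^sub>R q + s *\<^sub>R x"
    have yS: "y \<in> S"
      using S x qT \<open>T \<subseteq> S\<close> s unfolding convex_alt y_def by auto
    have "dist q y = s * d"
      using s by (simp add: y_def d_def dist_norm algebra_simps norm_minus_commute flip: scaleR_diff_right)
    also have "\<dots> < e"
      using d e s by (simp add: s_def field_simps min_def)
    finally have "y \<in> T"
      using e(2) yS hull_eq by (auto intro: hull_inc)
    have "(1 - s) * phi q + s * phi x \<le> phi y"
      using concave_onD[OF conc, of s q x] s \<open>T \<subseteq> S\<close> qT x by (auto simp: y_def)
    also have "phi y = (1 - s) * phi q + s * (c \<bullet> x + b)"
      using lin \<open>y \<in> T\<close> qT by (simp add: y_def inner_add_right algebra_simps)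
    finally show ?thesis using s(1) by simp
  qed
qed

text \<open>A point where \<phi> meets the affine function of a maximal domain of linearity \<open>T\<close> can be
  adjoined to \<open>T\<close> without losing linearity, so by maximality it already lies in \<open>T\<close>.\<close>

lemma affine_extension_eq_imp_mem:
  fixes S T :: "(real^'n) set" and phi :: "real^'n \<Rightarrow> real"
  assumes S: "convex S" and T: "convex T" "T \<subseteq> S" "T \<noteq> {}"
    and hull_eq: "affine hull T = affine hull S"
    and conc: "concave_on S phi" and lin: "\<forall>y\<in>T. phi y = c \<bullet> y + b"
    and maximal: "\<forall>U. convex U \<and> T \<subseteq> U \<and> U \<subseteq> S \<and> affine_on U phi \<longrightarrow> U = T"
    and v: "v \<in> S" "phi v = c \<bullet> v + b"
  shows "v \<in> T"
proof -
  define U where "U = convex hull (insert v T)"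
  have "U \<subseteq> S" unfolding U_def using S v T by (simp add: hull_minimal)
  have "phi y = c \<bullet> y + b" if "y \<in> U" for y
  proof -
    obtain w z where w: "0 \<le> w" "w \<le> 1" and "z \<in> T" and y: "y = (1 - w) *\<^sub>R v + w *\<^sub>R z"
      using \<open>y \<in> U\<close> unfolding U_def convex_hull_insert[OF \<open>T \<noteq> {}\<close>] convex_hull_eq[THEN iffD2, OF T(1)]
      by (smt (verit, best) mem_Collect_eq)
    have "c \<bullet> y + b = (1 - w) * phi v + w * phi z"
      using v lin \<open>z \<in> T\<close> by (simp add: y inner_add_right algebra_simps)
    also have "\<dots> \<le> phi y"
      using concave_onD[OF conc, of w v z] w v \<open>z \<in> T\<close> T by (auto simp: y)
    finally show ?thesis
      using concave_on_le_affine_extension[OF S T hull_eq conc lin] \<open>y \<in> U\<close> \<open>U \<subseteq> S\<close> by force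
  qed
  then have "affine_on U phi" unfolding affine_on_def by blast
  moreover have "convex U" "T \<subseteq> U" unfolding U_def by (auto intro: hull_inc)
  ultimately have "U = T" using maximal \<open>U \<subseteq> S\<close> by blast
  then show ?thesis unfolding U_def by (metis hull_inc insertI1)
qed

lemma origin_notin_affine_hull_face:
  fixes F P :: "'a::euclidean_space set"
  assumes "F face_of P" "convex P" "0 \<in> P" "0 \<notin> F"
  shows "0 \<notin> affine hull F"
  using face_of_imp_eq_affine_Int[OF assms(2,1)] assms(3,4) by blast

lemma hyperplane_avoiding_origin_eq_one:
  fixes S :: "'a::euclidean_space set"
  assumes "aff_dim S = int DIM('a) - 1" and "0 \<notin> affine hull S"
  obtains l where "\<forall>x\<in>S. l \<bullet> x = 1"
proof -
  obtain a \<beta> where hull_S: "affine hull S = {x. a \<bullet> x = \<beta>}"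
    using assms(1) aff_dim_eq_hyperplane[of S] by auto
  then have "\<beta> \<noteq> 0" using assms(2) by auto
  have "(a /\<^sub>R \<beta>) \<bullet> x = 1" if "x \<in> S" for x
    using hull_inc[OF that, of affine] hull_S \<open>\<beta> \<noteq> 0\<close> by auto
  then show ?thesis using that by blast
qed

lemma closed_cone_gen_polytope:
  assumes "polytope T" "T \<noteq> {}"
  shows "closed_cone_gen T = conic hull T"
proof -
  have "convex_cone hull (insert 0 T) = convex_cone hull T"
    by (simp add: convex_cone_hull_contains_0 hull_redundant)
  also have "\<dots> = conic hull T"
    using convex_cone_hull_separate_nonempty[OF assms(2)] assms(1)
    by (metis convex_hull_eq polytope_imp_convex)
  finally have "convex_cone hull (insert 0 T) = conic hull T" .
  then show ?thesis
    unfolding closed_cone_gen_def using closed_conic_hull_strong assms(1) closure_closed by metis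
qed

text \<open>The tie \<open>l \<bullet> x = 1\<close> on \<delta> turns the affine function \<open>c \<bullet> x + b\<close> representing \<phi> on
  \<open>T i\<close> into the linear form \<open>k = c + b l\<close>, the extension of \<phi> to the cone over \<open>T i\<close>.\<close>

lemma regular_decomposition_linear_majorant:
  fixes \<delta> :: "(real^'n) set" and phi :: "real^'n \<Rightarrow> real"
  assumes rd: "regular_decomposition \<delta> A h T phi" and i: "i \<in> {1..h}"
    and "convex \<delta>" "\<delta> \<noteq> {}" and l: "\<forall>x\<in>\<delta>. l \<bullet> x = 1"
  obtains k where "\<forall>x\<in>T i. phi x = k \<bullet> x" "\<forall>x\<in>\<delta>. phi x \<le> k \<bullet> x"
    "\<forall>x\<in>\<delta> - T i. phi x < k \<bullet> x"
proof -
  have "polytope (T i)" and dim_eq: "aff_dim (T i) = aff_dim \<delta>" and "T i \<subseteq> \<delta>"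
    and conc: "concave_on \<delta> phi" and "affine_on (T i) phi"
    and maximal: "\<forall>U. convex U \<and> T i \<subseteq> U \<and> U \<subseteq> \<delta> \<and> affine_on U phi \<longrightarrow> U = T i"
    using rd i unfolding regular_decomposition_def by blast+
  then obtain c b where lin: "\<forall>x\<in>T i. phi x = c \<bullet> x + b"
    unfolding affine_on_def by blast
  have T: "convex (T i)" "T i \<subseteq> \<delta>" "T i \<noteq> {}"
    using \<open>polytope (T i)\<close> \<open>T i \<subseteq> \<delta>\<close> dim_eq \<open>\<delta> \<noteq> {}\<close> polytope_imp_convex
    by (auto simp: aff_dim_empty)
  have hull_eq: "affine hull (T i) = affine hull \<delta>"
    by (rule affine_dim_equal) (use T dim_eq in \<open>auto simp: hull_mono\<close>)
  define k where "k = c + b *\<^sub>R l"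
  have k: "k \<bullet> x = c \<bullet> x + b" if "x \<in> \<delta>" for x
    using l that by (simp add: k_def inner_add_left)
  show ?thesis
  proof
    show "\<forall>x\<in>T i. phi x = k \<bullet> x" using lin k T by auto
    show le: "\<forall>x\<in>\<delta>. phi x \<le> k \<bullet> x"
      using concave_on_le_affine_extension[OF \<open>convex \<delta>\<close> T hull_eq conc lin] k by simp
    show "\<forall>x\<in>\<delta> - T i. phi x < k \<bullet> x"
      using affine_extension_eq_imp_mem[OF \<open>convex \<delta>\<close> T hull_eq conc lin maximal] le k
      by (metis DiffE order_le_imp_less_or_eq)
  qed
qed

lemma linear_le_m_phi:
  fixes V :: "nat \<Rightarrow> real^'n" and phi :: "real^'n \<Rightarrow> real"
  assumes inj: "inj_on V {1..J}" and "polytope P" and EV: "{v. v extreme_point_of P} \<subseteq> V ` {1..J}"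
    and r: "r \<in> conic hull P" and lin: "\<forall>x\<in>P. phi x = k \<bullet> x"
  shows "ereal (k \<bullet> r) \<le> m_phi phi J V r"
proof -
  define E where "E = {v. v extreme_point_of P}"
  have "finite E" using EV finite_subset unfolding E_def by blast
  have lin_E: "\<forall>x\<in>E. phi x = k \<bullet> x"
    using lin unfolding E_def extreme_point_of_def by blast
  have "P = convex hull E"
    unfolding E_def using Krein_Milman_Minkowski polytope_imp_compact polytope_imp_convex
      \<open>polytope P\<close> by blast
  then obtain t q where "t \<ge> 0" and q: "q \<in> convex hull E" and r_eq: "r = t *\<^sub>R q"
    using r unfolding conic_hull_explicit by blast
  obtain w where w: "\<forall>x\<in>E. 0 \<le> w x" "(\<Sum>x\<in>E. w x *\<^sub>R x) = q"
    using q convex_hull_finite[OF \<open>finite E\<close>] by auto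
  define u where "u j = (if V j \<in> E then t * w (V j) else 0)" for j
  have reindex: "(\<Sum>j=1..J. g (V j)) = (\<Sum>x\<in>E. g x)" if "\<forall>x. x \<notin> E \<longrightarrow> g x = 0"
    for g :: "real^'n \<Rightarrow> 'b::comm_monoid_add"
    using sum.reindex[OF inj, of g] sum.mono_neutral_right[of "V ` {1..J}" E g] EV that
    unfolding E_def by auto
  have sum_r: "(\<Sum>j=1..J. u j *\<^sub>R V j) = r"
    using reindex[of "\<lambda>x. (if x \<in> E then t * w x else 0) *\<^sub>R x"]
    unfolding r_eq w(2)[symmetric] by (simp add: u_def scaleR_sum_right cong: sum.cong)
  have "(\<Sum>j=1..J. u j * phi (V j)) = (\<Sum>x\<in>E. (t * w x) * (k \<bullet> x))"
    using reindex[of "\<lambda>x. (if x \<in> E then t * w x else 0) * phi x"] lin_E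
    by (simp add: u_def cong: sum.cong)
  also have "\<dots> = k \<bullet> r"
    unfolding r_eq w(2)[symmetric] by (simp add: inner_sum_right sum_distrib_left mult.assoc)
  finally have "(\<Sum>j=1..J. u j * phi (V j)) = k \<bullet> r" .
  moreover have "\<forall>j\<in>{1..J}. u j \<ge> 0" using \<open>t \<ge> 0\<close> w(1) by (auto simp: u_def)
  ultimately show ?thesis
    unfolding m_phi_def using sum_r by (intro Sup_upper) force
qed

lemma F_coeff_diff_nonzero:
  assumes "F_coeff p \<pi> J V UNIV r u - F_coeff p \<pi> J V C r u \<noteq> 0"
  shows "\<forall>j. j \<notin> {1..J} \<longrightarrow> u j = 0" and "(\<Sum>j=1..J. of_nat (u j) *\<^sub>R V j) = r"
    and "\<exists>j\<in>{1..J}. V j \<notin> C \<and> u j \<noteq> 0"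
  using assms unfolding F_coeff_def by (auto split: if_splits)

text \<open>Since \<open>l \<bullet> V\<^sub>j = 1\<close>, every exponent is bounded by \<open>l \<bullet> r = \<Sum> u\<^sub>j\<close>.\<close>

lemma finite_exponents_summing_to:
  fixes V :: "nat \<Rightarrow> real^'n"
  assumes l: "\<forall>j\<in>{1..J}. l \<bullet> V j = 1"
  shows "finite {u :: nat \<Rightarrow> nat. (\<forall>j. j \<notin> {1..J} \<longrightarrow> u j = 0)
                                 \<and> (\<Sum>j=1..J. of_nat (u j) *\<^sub>R V j) = r}" (is "finite ?U")
proof (rule finite_subset)
  define N where "N = nat \<lceil>l \<bullet> r\<rceil>"
  show "?U \<subseteq> {u. \<forall>j. (j \<in> {1..J} \<longrightarrow> u j \<in> {0..N}) \<and> (j \<notin> {1..J} \<longrightarrow> u j = 0)}"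
  proof (intro subsetI CollectI allI conjI impI)
    fix u j assume u: "u \<in> ?U"
    then show "j \<notin> {1..J} \<Longrightarrow> u j = 0" by blast
    assume j: "j \<in> {1..J}"
    have "real (u j) \<le> (\<Sum>j=1..J. real (u j))"
      using j by (intro member_le_sum) auto
    also have "\<dots> = (\<Sum>j=1..J. real (u j) * (l \<bullet> V j))" using l by simp
    also have "\<dots> = l \<bullet> r"
      using u by (auto simp: inner_sum_right)
    finally show "u j \<in> {0..N}" unfolding N_def by (simp add: le_nat_iff) linarith
  qed
qed (rule finite_set_of_finite_funs, auto)

lemma Sup_finite_less_ereal:
  fixes A :: "ereal set"
  assumes "finite A" "\<forall>x\<in>A. x < ereal c"
  shows "Sup A < ereal c"
  using assms by (induction A rule: finite_induct) (auto simp: bot_ereal_def)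

lemma phi_degree_F_coeff_diff_less:
  fixes V :: "nat \<Rightarrow> real^'n" and phi :: "real^'n \<Rightarrow> real"
  assumes l: "\<forall>j\<in>{1..J}. l \<bullet> V j = 1"
    and le: "\<forall>j\<in>{1..J}. phi (V j) \<le> k \<bullet> V j"
    and less: "\<forall>j\<in>{1..J}. V j \<notin> C \<longrightarrow> phi (V j) < k \<bullet> V j"
  shows "phi_degree phi J V (\<lambda>u. F_coeff p \<pi> J V UNIV r u - F_coeff p \<pi> J V C r u)
         < ereal (k \<bullet> r)"
proof -
  let ?U = "{u. F_coeff p \<pi> J V UNIV r u - F_coeff p \<pi> J V C r u \<noteq> 0}"
  have "finite ?U"
    by (rule finite_subset[OF _ finite_exponents_summing_to[OF l, of r]])
      (use F_coeff_diff_nonzero(1,2) in blast)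
  moreover have "(\<Sum>j=1..J. real (u j) * phi (V j)) < k \<bullet> r" if u: "u \<in> ?U" for u
  proof -
    obtain j0 where j0: "j0 \<in> {1..J}" "V j0 \<notin> C" "u j0 \<noteq> 0"
      using F_coeff_diff_nonzero(3) u by blast
    have "(\<Sum>j=1..J. real (u j) * phi (V j)) < (\<Sum>j=1..J. real (u j) * (k \<bullet> V j))"
      using le less j0
      by (intro sum_strict_mono_ex1[OF finite_atLeastAtMost] bexI[of _ j0]) (auto intro: mult_left_mono)
    also have "\<dots> = k \<bullet> (\<Sum>j=1..J. of_nat (u j) *\<^sub>R V j)"
      by (simp add: inner_sum_right)
    also have "\<dots> = k \<bullet> r"
      using F_coeff_diff_nonzero(2)[of p \<pi> J V r u C] u by simp
    finally show ?thesis .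
  qed
  ultimately show ?thesis
    unfolding phi_degree_def by (intro Sup_finite_less_ereal) auto
qed

theorem mainTheorem4:
  fixes \<Delta> \<delta> :: "(real^'n) set"
    and V :: "nat \<Rightarrow> real^'n" and J h i :: nat
    and T :: "nat \<Rightarrow> (real^'n) set" and phi :: "real^'n \<Rightarrow> real"
    and p :: nat and \<pi> :: "'k::field_char_0"
    and r :: "real^'n"
  assumes "integral_polytope \<Delta>"
    and "aff_dim \<Delta> = int CARD('n)"
    and "0 \<in> \<Delta>"
    and "\<delta> face_of \<Delta>" and "aff_dim \<delta> = int CARD('n) - 1" and "0 \<notin> \<delta>"
    and "\<forall>F. F face_of \<Delta> \<and> aff_dim F = int CARD('n) - 1 \<and> 0 \<notin> F \<longrightarrow> F = \<delta>"
    and "\<Delta> = convex hull (insert 0 \<delta>)"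
    and "inj_on V {1..J}"
    and "\<forall>j\<in>{1..J}. V j \<in> \<delta> \<and> lattice_pt (V j)"
    and "{v. v extreme_point_of \<delta>} \<subseteq> V ` {1..J}"
    and "regular_decomposition \<delta> (V ` {1..J}) h T phi"
    and "prime p" and "\<pi> \<noteq> 0"
    and "i \<in> {1..h}" and "r \<in> closed_cone_gen (T i)" and "lattice_pt r"
  shows "phi_degree phi J V
           (\<lambda>u. F_coeff p \<pi> J V UNIV r u - F_coeff p \<pi> J V (closed_cone_gen (T i)) r u)
         < m_phi phi J V r"
proof -
  have "convex \<delta>" using assms(4) face_of_imp_convex by blast
  have "\<delta> \<noteq> {}" using assms(5) by auto
  have "0 \<notin> affine hull \<delta>"
    using origin_notin_affine_hull_face[OF assms(4) _ assms(3,6)] assms(8) by simp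
  moreover have "aff_dim \<delta> = int DIM(real^'n) - 1" using assms(5) by simp
  ultimately obtain l where l: "\<forall>x\<in>\<delta>. l \<bullet> x = 1"
    using hyperplane_avoiding_origin_eq_one by blast
  obtain k where k_on_T: "\<forall>x\<in>T i. phi x = k \<bullet> x"
    and k: "\<forall>x\<in>\<delta>. phi x \<le> k \<bullet> x" "\<forall>x\<in>\<delta> - T i. phi x < k \<bullet> x"
    using regular_decomposition_linear_majorant[OF assms(12,15) \<open>convex \<delta>\<close> \<open>\<delta> \<noteq> {}\<close> l] .
  have "T i \<subseteq> closed_cone_gen (T i)"
    using hull_subset[of "insert 0 (T i)" convex_cone]
      closure_subset[of "convex_cone hull insert 0 (T i)"]
    unfolding closed_cone_gen_def by blast
  then have "phi_degree phi J V
      (\<lambda>u. F_coeff p \<pi> J V UNIV r u - F_coeff p \<pi> J V (closed_cone_gen (T i)) r u) < k \<bullet> r"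
    using assms(10) l k by (intro phi_degree_F_coeff_diff_less) auto
  also have "ereal (k \<bullet> r) \<le> m_phi phi J V r"
  proof (rule linear_le_m_phi[OF assms(9) _ _ _ k_on_T])
    have "polytope (T i)" "{v. v extreme_point_of (T i)} \<subseteq> V ` {1..J}" "T i \<noteq> {}"
      using assms(12,15) \<open>\<delta> \<noteq> {}\<close> unfolding regular_decomposition_def by (auto simp: aff_dim_empty)
    then show "polytope (T i)" "{v. v extreme_point_of (T i)} \<subseteq> V ` {1..J}" "r \<in> conic hull T i"
      using closed_cone_gen_polytope assms(16) by auto
  qed
  finally show ?thesis .
qed

end
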